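(* Let $D\subset\mathbb{R}^N$ be a bounded domain or $D=\mathbb{R}^N$. Suppose $g(t,x)$ is bounded and uniformly continuous in $(t,x)\in\mathbb{R}\times\bar D$ with $g(t,x)>0$ for all $(t,x)\in\mathbb{R}\times D$, and $f$ satisfies (A-$f$) in the context. Then for any fixed $x\in\bar D$, the ordinary differential equation $$u_t=g(t,x)+u\,f(t,x,u)$$ has at most one strictly positive bounded entire solution $u^*(t)$ (i.e. a solution defined for all $t\in\mathbb{R}$ with $\inf_{t\in\mathbb{R}}u^*(t)>0$ and $\sup_{t\in\mathbb{R}}u^*(t)<\infty$).
   Context: Assumption (A-$f$) (for $f:\mathbb{R}\times\bar D\times\mathbb{R}\to\mathbb{R}$): $f$ is $C^1$ in $u$; $f$ and $f_u$ are uniformly continuous and bounded on $\mathbb{R}\times\bar D\times E$ for every bounded $E\subset\mathbb{R}$; $f$ is (Bohr) almost periodic in $t$ uniformly with respect to $x\in\bar D$ and $u$ in bounded sets; when $D=\mathbb{R}^N$, $f$ is also almost periodic in $x$ uniformly with respect to $t$ and $u$ in bounded sets; there is $U>0$ with $f(t,x,u)+1<0$ for all $(t,x)$ and $u\ge U$; and $\sup_{t\in\mathbb{R},x\in\bar D}f_u(t,x,u)<0$ for each $u\ge0$. *)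

theory Defs
  imports "HOL-Analysis.Analysis"
begin

text \<open>Bohr almost periodicity in t, uniformly w.r.t. x in the closure of D and u in bounded sets:
  for every bounded E and every eps > 0 the set of eps-almost periods is relatively dense.\<close>
definition ap_in_t :: "'a::euclidean_space set \<Rightarrow> (real \<Rightarrow> 'a \<Rightarrow> real \<Rightarrow> real) \<Rightarrow> bool" where
  "ap_in_t D f \<longleftrightarrow> (\<forall>E. bounded E \<longrightarrow> (\<forall>\<epsilon>>0. \<exists>L>0. \<forall>a::real. \<exists>\<tau>\<in>{a..a+L}.
      \<forall>t x u. x \<in> closure D \<and> u \<in> E \<longrightarrow> \<bar>f (t + \<tau>) x u - f t x u\<bar> < \<epsilon>))"

text \<open>Bohr almost periodicity in x (for D = R^N), uniformly w.r.t. t and u in bounded sets: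
  the set of eps-almost periods in R^N is relatively dense.\<close>
definition ap_in_x :: "(real \<Rightarrow> 'a::euclidean_space \<Rightarrow> real \<Rightarrow> real) \<Rightarrow> bool" where
  "ap_in_x f \<longleftrightarrow> (\<forall>E. bounded E \<longrightarrow> (\<forall>\<epsilon>>0. \<exists>L>0. \<forall>a::'a. \<exists>\<tau>\<in>cball a L.
      \<forall>t x u. u \<in> E \<longrightarrow> \<bar>f t (x + \<tau>) u - f t x u\<bar> < \<epsilon>))"

definition assm_Af :: "'a::euclidean_space set \<Rightarrow> (real \<Rightarrow> 'a \<Rightarrow> real \<Rightarrow> real)
    \<Rightarrow> (real \<Rightarrow> 'a \<Rightarrow> real \<Rightarrow> real) \<Rightarrow> bool" where
  "assm_Af D f fu \<longleftrightarrow>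
     (\<forall>t x u. x \<in> closure D \<longrightarrow> ((\<lambda>v. f t x v) has_real_derivative fu t x u) (at u)) \<and>
     (\<forall>t x. x \<in> closure D \<longrightarrow> continuous_on UNIV (\<lambda>v. fu t x v)) \<and>
     (\<forall>E. bounded E \<longrightarrow>
        uniformly_continuous_on (UNIV \<times> closure D \<times> E) (\<lambda>(t,x,u). f t x u) \<and>
        uniformly_continuous_on (UNIV \<times> closure D \<times> E) (\<lambda>(t,x,u). fu t x u) \<and>
        bounded ((\<lambda>(t,x,u). f t x u) ` (UNIV \<times> closure D \<times> E)) \<and>
        bounded ((\<lambda>(t,x,u). fu t x u) ` (UNIV \<times> closure D \<times> E))) \<and>
     ap_in_t D f \<and>
     (D = UNIV \<longrightarrow> ap_in_x f) \<and>
     (\<exists>U>0. \<forall>t x u. x \<in> closure D \<and> u \<ge> U \<longrightarrow> f t x u + 1 < 0) \<and>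
     (\<forall>u\<ge>0. Sup ((\<lambda>(t,x). fu t x u) ` (UNIV \<times> closure D)) < 0)"

definition pos_bdd_entire_sol :: "(real \<Rightarrow> 'a \<Rightarrow> real) \<Rightarrow> (real \<Rightarrow> 'a \<Rightarrow> real \<Rightarrow> real)
    \<Rightarrow> 'a \<Rightarrow> (real \<Rightarrow> real) \<Rightarrow> bool" where
  "pos_bdd_entire_sol g f x u \<longleftrightarrow>
     (\<forall>t. (u has_real_derivative (g t x + u t * f t x (u t))) (at t)) \<and>
     bdd_below (range u) \<and> Inf (range u) > 0 \<and> bdd_above (range u)"

end

theory Submission
  imports Defs
begin

text \<open>
  Both solutions take values in a common interval [m, M] with m > 0. Since
  (ln u)' = g/u + f(u) and v \<mapsto> g/v + f(v) is decreasing with slope at most -\<delta> < 0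
  on [m, M] (uniformly in t, by compactness and the uniform continuity of f_u), the
  difference w = ln u1 - ln u2 satisfies (w^2)' \<le> -2 \<delta> m w^2. Hence w^2 grows
  exponentially backwards in time, which is incompatible with boundedness unless w = 0.
\<close>

lemma DERIV_le_neg_imp_diff_le:
  fixes F F' :: "real \<Rightarrow> real"
  assumes "b \<le> a" and "\<And>v. (F has_real_derivative F' v) (at v)"
    and "\<And>v. b \<le> v \<Longrightarrow> v \<le> a \<Longrightarrow> F' v \<le> -\<delta>"
  shows "F a - F b \<le> -\<delta> * (a - b)"
proof -
  have "(\<lambda>v. F v + \<delta> * v) a \<le> (\<lambda>v. F v + \<delta> * v) b"
  proof (rule DERIV_nonpos_imp_nonincreasing[OF \<open>b \<le> a\<close>])
    fix v assume "b \<le> v" "v \<le> a"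
    then have "F' v + \<delta> \<le> 0" using assms(3) by fastforce
    moreover have "((\<lambda>v. F v + \<delta> * v) has_real_derivative F' v + \<delta>) (at v)"
      by (auto intro!: derivative_eq_intros assms(2))
    ultimately show "\<exists>y. ((\<lambda>v. F v + \<delta> * v) has_real_derivative y) (at v) \<and> y \<le> 0"
      by blast
  qed
  then show ?thesis by (simp add: algebra_simps)
qed

lemma ln_diff_mult_decreasing_le:
  fixes F F' :: "real \<Rightarrow> real"
  assumes "0 < m" and "a \<in> {m..M}" and "b \<in> {m..M}" and "0 \<le> G" and "0 \<le> \<delta>"
    and "\<And>v. (F has_real_derivative F' v) (at v)"
    and "\<And>v. m \<le> v \<Longrightarrow> v \<le> M \<Longrightarrow> F' v \<le> -\<delta>"
  shows "(ln a - ln b) * ((G / a + F a) - (G / b + F b)) \<le> - (\<delta> * m) * (ln a - ln b)\<^sup>2"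
proof -
  have *: "(ln a - ln b) * ((G / a + F a) - (G / b + F b)) \<le> - (\<delta> * m) * (ln a - ln b)\<^sup>2"
    if ba: "b \<le> a" and "a \<in> {m..M}" "b \<in> {m..M}" for a b
  proof -
    define L where "L = ln a - ln b"
    have pos: "0 < a" "0 < b" using that \<open>0 < m\<close> by auto
    have "0 \<le> L" using pos ba by (simp add: L_def)
    have "m * L \<le> b * L" using \<open>0 \<le> L\<close> that by (simp add: mult_right_mono)
    also have "b * L \<le> a - b"
      using ln_diff_le[OF pos] pos by (simp add: L_def field_simps)
    finally have mL: "m * L \<le> a - b" .
    have "G / a \<le> G / b" using pos ba \<open>0 \<le> G\<close> by (simp add: divide_left_mono)
    moreover have "F a - F b \<le> -\<delta> * (a - b)"
      using DERIV_le_neg_imp_diff_le[OF ba assms(6)] assms(7) that by auto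
    moreover have "\<delta> * (m * L) \<le> \<delta> * (a - b)" using mL \<open>0 \<le> \<delta>\<close> by (rule mult_left_mono)
    ultimately have "(G / a + F a) - (G / b + F b) \<le> - (\<delta> * m) * L"
      by (simp add: mult.assoc)
    then have "L * ((G / a + F a) - (G / b + F b)) \<le> L * (- (\<delta> * m) * L)"
      using \<open>0 \<le> L\<close> by (rule mult_left_mono)
    then show ?thesis by (simp add: L_def power2_eq_square algebra_simps)
  qed
  show ?thesis
  proof (cases "b \<le> a")
    case True
    then show ?thesis using *[of b a] assms(2,3) by blast
  next
    case False
    then have "(ln b - ln a) * ((G / b + F b) - (G / a + F a)) \<le> - (\<delta> * m) * (ln b - ln a)\<^sup>2"
      using *[of a b] assms(2,3) by auto
    then show ?thesis by (simp add: power2_commute algebra_simps)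
  qed
qed

lemma bounded_nonneg_exponential_decay_imp_zero:
  fixes V V' :: "real \<Rightarrow> real"
  assumes "0 < k" and "\<And>t. (V has_real_derivative V' t) (at t)"
    and "\<And>t. V' t \<le> - k * V t" and "\<And>t. 0 \<le> V t" and "bdd_above (range V)"
  shows "V t = 0"
proof (rule ccontr)
  assume "V t \<noteq> 0"
  with assms(4) have "0 < V t" by (simp add: order_less_le)
  obtain B where B: "\<And>s. V s \<le> B" using assms(5) by (auto simp: bdd_above_def)
  have weighted_mono: "exp (k * t) * V t \<le> exp (k * s) * V s" if "s \<le> t" for s
  proof -
    have "(\<lambda>r. exp (k * r) * V r) t \<le> (\<lambda>r. exp (k * r) * V r) s"
    proof (rule DERIV_nonpos_imp_nonincreasing[OF that])
      fix r
      have "((\<lambda>r. exp (k * r)) has_real_derivative exp (k * r) * k) (at r)"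
        using DERIV_chain2[OF DERIV_exp DERIV_cmult_Id[of k r]] by (simp add: mult.commute)
      from DERIV_mult[OF this assms(2)]
      have "((\<lambda>r. exp (k * r) * V r) has_real_derivative exp (k * r) * (V' r + k * V r)) (at r)"
        by (simp add: algebra_simps)
      moreover have "exp (k * r) * (V' r + k * V r) \<le> 0"
        using assms(3)[of r] by (simp add: mult_nonneg_nonpos)
      ultimately show "\<exists>y. ((\<lambda>r. exp (k * r) * V r) has_real_derivative y) (at r) \<and> y \<le> 0"
        by blast
    qed
    then show ?thesis by simp
  qed
  have grow: "(1 + k * (t - s)) * V t \<le> V s" if "s \<le> t" for s
  proof -
    have "exp (k * (t - s)) * V t = exp (k * t) * V t / exp (k * s)"
      by (simp add: right_diff_distrib exp_diff)
    also have "\<dots> \<le> exp (k * s) * V s / exp (k * s)"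
      using \<open>s \<le> t\<close> by (intro divide_right_mono) (simp_all add: weighted_mono)
    also have "\<dots> = V s" by simp
    finally have "exp (k * (t - s)) * V t \<le> V s" .
    moreover have "(1 + k * (t - s)) * V t \<le> exp (k * (t - s)) * V t"
      using \<open>0 < V t\<close> by simp
    ultimately show ?thesis by linarith
  qed
  define s where "s = t - B / (k * V t)"
  have "0 \<le> B" using B[of t] assms(4)[of t] by linarith
  then have "s \<le> t" using \<open>0 < k\<close> \<open>0 < V t\<close> by (simp add: s_def)
  have "(1 + k * (t - s)) * V t = V t + B" using \<open>0 < k\<close> \<open>0 < V t\<close> by (simp add: s_def field_simps)
  with grow[OF \<open>s \<le> t\<close>] B[of s] \<open>0 < V t\<close> show False by linarith
qed

lemma bounded_positive_solutions_unique:
  fixes F F' :: "real \<Rightarrow> real \<Rightarrow> real" and G u1 u2 :: "real \<Rightarrow> real"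
  assumes "0 < m" and "0 < \<delta>" and "\<And>t. 0 \<le> G t"
    and "\<And>t v. (F t has_real_derivative F' t v) (at v)"
    and "\<And>t v. m \<le> v \<Longrightarrow> v \<le> M \<Longrightarrow> F' t v \<le> -\<delta>"
    and "\<And>t. (u1 has_real_derivative (G t + u1 t * F t (u1 t))) (at t)"
    and "\<And>t. (u2 has_real_derivative (G t + u2 t * F t (u2 t))) (at t)"
    and range1: "\<And>t. u1 t \<in> {m..M}" and range2: "\<And>t. u2 t \<in> {m..M}"
  shows "u1 = u2"
proof
  fix t0
  have pos: "0 < u1 t" "0 < u2 t" for t using range1[of t] range2[of t] \<open>0 < m\<close> by auto
  define w where "w t = ln (u1 t) - ln (u2 t)" for t
  define w' where "w' t = (G t / u1 t + F t (u1 t)) - (G t / u2 t + F t (u2 t))" for t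
  have dw: "(w has_real_derivative w' t) (at t)" for t
  proof -
    have "((\<lambda>t. ln (u1 t)) has_real_derivative (G t + u1 t * F t (u1 t)) / u1 t) (at t)"
      using DERIV_chain2[OF DERIV_ln[OF pos(1)] assms(6)] by (simp add: divide_inverse mult.commute)
    moreover have "((\<lambda>t. ln (u2 t)) has_real_derivative (G t + u2 t * F t (u2 t)) / u2 t) (at t)"
      using DERIV_chain2[OF DERIV_ln[OF pos(2)] assms(7)] by (simp add: divide_inverse mult.commute)
    ultimately have "(w has_real_derivative
        (G t + u1 t * F t (u1 t)) / u1 t - (G t + u2 t * F t (u2 t)) / u2 t) (at t)"
      unfolding w_def by (rule DERIV_diff)
    then show ?thesis using pos[of t] by (simp add: w'_def add_divide_distrib)
  qed
  have "(w t0)\<^sup>2 = 0"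
  proof (rule bounded_nonneg_exponential_decay_imp_zero[where V = "\<lambda>t. (w t)\<^sup>2"])
    show "0 < 2 * (\<delta> * m)" using assms(1,2) by simp
    show "((\<lambda>t. (w t)\<^sup>2) has_real_derivative 2 * (w t * w' t)) (at t)" for t
      using DERIV_power[OF dw[of t], of 2] by (simp add: algebra_simps)
    show "2 * (w t * w' t) \<le> - (2 * (\<delta> * m)) * (w t)\<^sup>2" for t
    proof -
      have "w t * w' t \<le> - (\<delta> * m) * (w t)\<^sup>2"
        unfolding w_def w'_def
        by (rule ln_diff_mult_decreasing_le[OF \<open>0 < m\<close> range1[of t] range2[of t] assms(3)[of t]
              less_imp_le[OF \<open>0 < \<delta>\<close>] assms(4)[of t] assms(5)[of _ t]])
      then show ?thesis by linarith
    qed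
    have "\<bar>w t\<bar> \<le> ln M - ln m" for t
    proof -
      have "ln m \<le> ln (u1 t)" "ln (u1 t) \<le> ln M" "ln m \<le> ln (u2 t)" "ln (u2 t) \<le> ln M"
        using range1[of t] range2[of t] pos[of t] \<open>0 < m\<close> by auto
      then show ?thesis unfolding w_def by linarith
    qed
    then have "\<bar>w t\<bar>\<^sup>2 \<le> (ln M - ln m)\<^sup>2" for t
      by (rule power_mono) simp
    then show "bdd_above (range (\<lambda>t. (w t)\<^sup>2))" by (intro bdd_aboveI2) simp
  qed simp
  then have "ln (u1 t0) = ln (u2 t0)" by (simp add: w_def)
  then show "u1 t0 = u2 t0" using pos[of t0] by simp
qed

lemma continuous_on_Sup_equicontinuous:
  fixes h :: "'p \<Rightarrow> 'b::metric_space \<Rightarrow> real"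
  assumes "A \<noteq> {}" and bdd: "\<And>v. v \<in> B \<Longrightarrow> bdd_above ((\<lambda>p. h p v) ` A)"
    and equicont: "\<And>e. 0 < e \<Longrightarrow>
      \<exists>\<eta>>0. \<forall>p\<in>A. \<forall>v\<in>B. \<forall>v'\<in>B. dist v' v < \<eta> \<longrightarrow> dist (h p v') (h p v) < e"
  shows "continuous_on B (\<lambda>v. Sup ((\<lambda>p. h p v) ` A))"
  unfolding continuous_on_iff
proof (intro ballI allI impI)
  fix v and e :: real
  assume "v \<in> B" and "0 < e"
  then obtain \<eta> where "0 < \<eta>"
    and \<eta>: "\<And>p v v'. p \<in> A \<Longrightarrow> v \<in> B \<Longrightarrow> v' \<in> B \<Longrightarrow> dist v' v < \<eta> \<Longrightarrow> dist (h p v') (h p v) < e / 2"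
    using equicont[of "e / 2"] by auto
  have Sup_le: "Sup ((\<lambda>p. h p a) ` A) \<le> Sup ((\<lambda>p. h p b) ` A) + e / 2"
    if "a \<in> B" "b \<in> B" "dist a b < \<eta>" for a b
  proof (rule cSup_least)
    show "(\<lambda>p. h p a) ` A \<noteq> {}" using \<open>A \<noteq> {}\<close> by simp
    fix z assume "z \<in> (\<lambda>p. h p a) ` A"
    then obtain p where "p \<in> A" and z: "z = h p a" by blast
    then have "h p a < h p b + e / 2"
      using \<eta>[of p b a] that unfolding dist_real_def abs_diff_less_iff by simp
    moreover have "h p b \<le> Sup ((\<lambda>p. h p b) ` A)"
      using \<open>p \<in> A\<close> bdd[OF \<open>b \<in> B\<close>] by (auto intro: cSup_upper)
    ultimately show "z \<le> Sup ((\<lambda>p. h p b) ` A) + e / 2" using z by linarith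
  qed
  show "\<exists>d>0. \<forall>v'\<in>B. dist v' v < d \<longrightarrow>
      dist (Sup ((\<lambda>p. h p v') ` A)) (Sup ((\<lambda>p. h p v) ` A)) < e"
  proof (intro exI[of _ \<eta>] conjI ballI impI \<open>0 < \<eta>\<close>)
    fix v' assume "v' \<in> B" "dist v' v < \<eta>"
    then show "dist (Sup ((\<lambda>p. h p v') ` A)) (Sup ((\<lambda>p. h p v) ` A)) < e"
      using Sup_le[of v' v] Sup_le[of v v'] \<open>v \<in> B\<close> \<open>0 < e\<close>
      by (simp add: dist_real_def dist_commute abs_le_iff)
  qed
qed

lemma uniform_negative_bound_of_Sup_negative:
  fixes h :: "'p \<Rightarrow> 'b::metric_space \<Rightarrow> real"
  assumes "compact B" and "A \<noteq> {}" and bdd: "\<And>v. v \<in> B \<Longrightarrow> bdd_above ((\<lambda>p. h p v) ` A)"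
    and "\<And>e. 0 < e \<Longrightarrow>
      \<exists>\<eta>>0. \<forall>p\<in>A. \<forall>v\<in>B. \<forall>v'\<in>B. dist v' v < \<eta> \<longrightarrow> dist (h p v') (h p v) < e"
    and neg: "\<And>v. v \<in> B \<Longrightarrow> Sup ((\<lambda>p. h p v) ` A) < 0"
  obtains \<delta> where "0 < \<delta>" and "\<And>p v. p \<in> A \<Longrightarrow> v \<in> B \<Longrightarrow> h p v \<le> -\<delta>"
proof (cases "B = {}")
  case True
  then show ?thesis using that[of 1] by simp
next
  case False
  define S where "S v = Sup ((\<lambda>p. h p v) ` A)" for v
  have "continuous_on B S"
    unfolding S_def by (rule continuous_on_Sup_equicontinuous) (use assms in auto)
  then obtain v0 where "v0 \<in> B" and v0: "\<And>v. v \<in> B \<Longrightarrow> S v \<le> S v0"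
    using continuous_attains_sup[OF \<open>compact B\<close> False] by blast
  show ?thesis
  proof (rule that[of "- S v0"])
    show "0 < - S v0" using neg[OF \<open>v0 \<in> B\<close>] by (simp add: S_def)
    fix p v assume "p \<in> A" "v \<in> B"
    then have "h p v \<le> S v" unfolding S_def using bdd by (auto intro: cSup_upper)
    then show "h p v \<le> - (- S v0)" using v0[OF \<open>v \<in> B\<close>] by simp
  qed
qed

lemma assm_Af_uniformly_decreasing:
  assumes Af: "assm_Af D f fu" and "closure D \<noteq> {}" and "0 \<le> m"
  obtains \<delta> where "0 < \<delta>" and "\<And>t y v. y \<in> closure D \<Longrightarrow> v \<in> {m..M} \<Longrightarrow> fu t y v \<le> -\<delta>"
proof -
  let ?A = "(UNIV :: real set) \<times> closure D" and ?h = "\<lambda>p v. fu (fst p) (snd p) v"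
  have image_eq: "(\<lambda>p. ?h p v) ` ?A = (\<lambda>(t, y). fu t y v) ` ?A" for v
    by (simp add: split_def)
  obtain \<delta> where "0 < \<delta>" and "\<And>p v. p \<in> ?A \<Longrightarrow> v \<in> {m..M} \<Longrightarrow> ?h p v \<le> -\<delta>"
  proof (rule uniform_negative_bound_of_Sup_negative[of "{m..M}" ?A ?h])
    show "?A \<noteq> {}" using \<open>closure D \<noteq> {}\<close> by simp
    show "bdd_above ((\<lambda>p. ?h p v) ` ?A)" for v
    proof -
      have "bounded ((\<lambda>(t, y, u). fu t y u) ` (UNIV \<times> closure D \<times> {v}))"
        using Af by (simp add: assm_Af_def)
      moreover have "(\<lambda>p. ?h p v) ` ?A \<subseteq> (\<lambda>(t, y, u). fu t y u) ` (UNIV \<times> closure D \<times> {v})"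
        by force
      ultimately show ?thesis by (meson bounded_imp_bdd_above bounded_subset)
    qed
    show "\<exists>\<eta>>0. \<forall>p\<in>?A. \<forall>v\<in>{m..M}. \<forall>v'\<in>{m..M}. dist v' v < \<eta> \<longrightarrow> dist (?h p v') (?h p v) < e"
      if "0 < e" for e
    proof -
      have "uniformly_continuous_on (UNIV \<times> closure D \<times> {m..M}) (\<lambda>(t, y, u). fu t y u)"
        using Af by (simp add: assm_Af_def)
      then obtain \<eta> where "0 < \<eta>" and \<eta>: "\<forall>q\<in>UNIV \<times> closure D \<times> {m..M}.
          \<forall>q'\<in>UNIV \<times> closure D \<times> {m..M}. dist q' q < \<eta> \<longrightarrow>
            dist ((\<lambda>(t, y, u). fu t y u) q') ((\<lambda>(t, y, u). fu t y u) q) < e"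
        using \<open>0 < e\<close> unfolding uniformly_continuous_on_def by blast
      show ?thesis
      proof (intro exI[of _ \<eta>] conjI ballI impI \<open>0 < \<eta>\<close>)
        fix p v v' assume "p \<in> ?A" "v \<in> {m..M}" "v' \<in> {m..M}" "dist v' v < \<eta>"
        then show "dist (?h p v') (?h p v) < e"
          using \<eta>[rule_format, of "(fst p, snd p, v)" "(fst p, snd p, v')"]
          by (auto simp: dist_Pair_Pair)
      qed
    qed
    show "Sup ((\<lambda>p. ?h p v) ` ?A) < 0" if "v \<in> {m..M}" for v
      using Af \<open>0 \<le> m\<close> that unfolding image_eq assm_Af_def by auto
  qed auto
  then show ?thesis using that by auto
qed

lemma nonneg_on_closure_of_pos:
  fixes g :: "real \<Rightarrow> 'a::metric_space \<Rightarrow> real"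
  assumes "continuous_on (UNIV \<times> closure D) (\<lambda>(t, y). g t y)"
    and "\<forall>t. \<forall>y\<in>D. 0 < g t y" and "x \<in> closure D"
  shows "0 \<le> g t x"
proof -
  have "continuous_on (closure D) (\<lambda>y. (\<lambda>(t, y). g t y) (t, y))"
    by (rule continuous_on_compose2[OF assms(1)]) (auto intro!: continuous_intros)
  then have "continuous_on (closure D) (g t)" by simp
  then show ?thesis
    by (rule continuous_ge_on_closure[OF _ assms(3)]) (use assms(2) in \<open>auto intro: less_imp_le\<close>)
qed

lemma pos_bdd_entire_sol_bounds:
  assumes "pos_bdd_entire_sol g f x u"
  obtains m M where "0 < m" and "\<And>t. u t \<in> {m..M}"
proof (rule that)
  show "0 < Inf (range u)" using assms by (simp add: pos_bdd_entire_sol_def)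
  show "u t \<in> {Inf (range u)..Sup (range u)}" for t
    using assms by (auto simp: pos_bdd_entire_sol_def intro: cInf_lower cSup_upper)
qed

theorem lemma3p1:
  fixes D :: "'a::euclidean_space set"
    and g :: "real \<Rightarrow> 'a \<Rightarrow> real"
    and f fu :: "real \<Rightarrow> 'a \<Rightarrow> real \<Rightarrow> real"
    and x :: 'a
  assumes "(open D \<and> connected D \<and> D \<noteq> {} \<and> bounded D) \<or> D = UNIV"
    and "bounded ((\<lambda>(t,y). g t y) ` (UNIV \<times> closure D))"
    and "uniformly_continuous_on (UNIV \<times> closure D) (\<lambda>(t,y). g t y)"
    and "\<forall>t. \<forall>y\<in>D. g t y > 0"
    and "assm_Af D f fu"
    and "x \<in> closure D"
    and "pos_bdd_entire_sol g f x u1"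
    and "pos_bdd_entire_sol g f x u2"
  shows "u1 = u2"
proof -
  obtain m1 M1 where "0 < m1" and range1: "\<And>t. u1 t \<in> {m1..M1}"
    using pos_bdd_entire_sol_bounds[OF assms(7)] by blast
  obtain m2 M2 where "0 < m2" and range2: "\<And>t. u2 t \<in> {m2..M2}"
    using pos_bdd_entire_sol_bounds[OF assms(8)] by blast
  define m M where "m = min m1 m2" and "M = max M1 M2"
  have "0 < m" using \<open>0 < m1\<close> \<open>0 < m2\<close> by (simp add: m_def)
  have "closure D \<noteq> {}" using assms(6) by auto
  then obtain \<delta> where "0 < \<delta>"
    and slope: "\<And>t y v. y \<in> closure D \<Longrightarrow> v \<in> {m..M} \<Longrightarrow> fu t y v \<le> -\<delta>"
    using assm_Af_uniformly_decreasing[OF assms(5) _ less_imp_le[OF \<open>0 < m\<close>]] by blast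
  show ?thesis
  proof (rule bounded_positive_solutions_unique[of m \<delta> "\<lambda>t. g t x" "\<lambda>t. f t x" "\<lambda>t. fu t x" M])
    show "0 \<le> g t x" for t
      using nonneg_on_closure_of_pos[OF uniformly_continuous_imp_continuous[OF assms(3)] assms(4,6)] .
    show "(f t x has_real_derivative fu t x v) (at v)" for t v
      using assms(5,6) by (simp add: assm_Af_def)
    show "fu t x v \<le> -\<delta>" if "m \<le> v" "v \<le> M" for t v
      using slope[OF assms(6)] that by simp
    show "u1 t \<in> {m..M}" "u2 t \<in> {m..M}" for t
      using range1[of t] range2[of t] by (auto simp: m_def M_def)
  qed (use \<open>0 < m\<close> \<open>0 < \<delta>\<close> assms(7,8) in \<open>auto simp: pos_bdd_entire_sol_def\<close>)
qed

end
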